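(* Let $0<q_1<q_2<1$, $a,b,c\in\mathbb{R}$, and consider the complex-valued function $$\Delta(s)=s^{q_1+q_2}+as^{q_2}+bs^{q_1}+c,$$ where $s^{q_1},s^{q_2},s^{q_1+q_2}$ are principal values of the complex power functions. 1. If $c<0$, then $\Delta(s)$ has at least one positive real root. 2. $\Delta(0)=0$ if and only if $c=0$. 3. Assume $c>0$, and let $a^\star_{c,q_1,q_2}:\mathbb{R}\to\mathbb{R}$ be the function whose graph (in the $(b,a)$-plane) is the curve $b=\rho_1\omega^{q_2}-c\rho_2\omega^{-q_1}$, $a=c\rho_1\omega^{-q_2}-\rho_2\omega^{q_1}$, $\omega>0$, where $\rho_1=\sin\frac{q_1\pi}{2}/\sin\frac{(q_2-q_1)\pi}{2}$ and $\rho_2=\sin\frac{q_2\pi}{2}/\sin\frac{(q_2-q_1)\pi}{2}$; write $a^\star(b,c,q_1,q_2)=a^\star_{c,q_1,q_2}(b)$. Then: (a) if $a\ge 0$ and $b\ge 0$, all roots of $\Delta(s)$ satisfy $\Re(s)<0$; (b) $\Delta(s)$ has a pair of pure imaginary roots if and only if $a=a^\star(b,c,q_1,q_2)$; (c) if $s=s(a,b,c,q_1,q_2)$ is a root of $\Delta(s)$, depending differentiably on $a$, such that $\Re(s(a^\star,b,c,q_1,q_2))=0$ where $a^\star=a^\star(b,c,q_1,q_2)$, then the transversality condition $\frac{\partial \Re(s)}{\partial a}\big|_{a=a^\star}<0$ holds; (d) all roots of $\Delta(s)$ are in the open left half-plane if and only if $a>a^\star(b,c,q_1,q_2)$; (e)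 $\Delta(s)$ has a pair of roots in the open right half-plane if and only if $a<a^\star(b,c,q_1,q_2)$.
   Context: Principal value: $s^{q}=|s|^q e^{iq\arg(s)}$ with $\arg(s)\in(-\pi,\pi]$ (and $0^q=0$). The curve described in part 3 is the graph of a bijective decreasing function $\mathbb{R}\to\mathbb{R}$, so $a^\star_{c,q_1,q_2}$ is well defined. *)

theory Defs
  imports "HOL-Analysis.Analysis"
begin

text \<open>Characteristic function with principal complex powers
  (complex powr: 0 powr w = 0, otherwise exp (w * Ln z), Ln principal).\<close>
definition Delta :: "real \<Rightarrow> real \<Rightarrow> real \<Rightarrow> real \<Rightarrow> real \<Rightarrow> complex \<Rightarrow> complex" where
  "Delta q1 q2 a b c s =
     s powr (complex_of_real (q1 + q2)) + complex_of_real a * s powr (complex_of_real q2)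
     + complex_of_real b * s powr (complex_of_real q1) + complex_of_real c"

definition rho1 :: "real \<Rightarrow> real \<Rightarrow> real" where
  "rho1 q1 q2 = sin (q1 * pi / 2) / sin ((q2 - q1) * pi / 2)"

definition rho2 :: "real \<Rightarrow> real \<Rightarrow> real" where
  "rho2 q1 q2 = sin (q2 * pi / 2) / sin ((q2 - q1) * pi / 2)"

definition astar :: "real \<Rightarrow> real \<Rightarrow> real \<Rightarrow> real \<Rightarrow> real" where
  "astar b c q1 q2 = (THE a. \<exists>\<omega>>0.
      b = rho1 q1 q2 * \<omega> powr q2 - c * rho2 q1 q2 * \<omega> powr (- q1) \<and>
      a = c * rho1 q1 q2 * \<omega> powr (- q2) - rho2 q1 q2 * \<omega> powr q1)"

end

theory Submission
  imports Defs "HOL-Real_Asymp.Real_Asymp"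
begin

text \<open>For \<open>s \<noteq> 0\<close> one has \<open>Delta s = s powr q2 * (a - G s)\<close> with
  \<open>G s = - (s powr q1 + b * s powr (q1 - q2) + c * s powr (- q2))\<close>, so the roots are the solutions
  of \<open>G s = a\<close>. In polar coordinates \<open>G (rcis r t) = X r t - \<i> * r powr (q1 - q2) * H r t\<close>. For
  \<open>0 < t < pi\<close> the function \<open>H \<cdot> t\<close> is strictly increasing in \<open>r\<close> with a unique zero \<open>radius t\<close>, and
  \<open>a_at t = X (radius t) t\<close> is strictly increasing in \<open>t\<close> by the Cauchy--Riemann equations; on the
  positive real axis \<open>X r 0\<close> stays below the limit of \<open>a_at\<close> at \<open>0\<close>. A root with \<open>Re s \<ge> 0\<close>
  has \<open>\<bar>arg s\<bar> \<le> pi / 2\<close> and therefore forces \<open>a \<le> a_at (pi / 2) = a\<^sup>\<star>\<close>, with equality only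
  for the imaginary pair \<open>\<plusminus> \<i> * radius (pi / 2)\<close>; conversely every \<open>a < a\<^sup>\<star>\<close> is attained at an
  angle in \<open>(0, pi / 2)\<close> or on the positive real axis. Differentiating \<open>G (s a) = a\<close> gives
  \<open>s' = 1 / G' s\<close>, and \<open>Re (G' s) < 0\<close> at imaginary roots. For \<open>c < 0\<close> a positive root exists by
  the intermediate value theorem.\<close>

lemma rcis_powr_of_real:
  assumes "r > 0" "t \<in> {-pi<..pi}"
  shows "rcis r t powr complex_of_real q = rcis (r powr q) (q * t)"
proof -
  have "rcis r t powr complex_of_real q = exp (complex_of_real q * Complex (ln r) t)"
    using assms by (simp add: powr_def Ln_rcis)
  also have "\<dots> = exp (complex_of_real (q * ln r)) * exp (\<i> * complex_of_real (q * t))"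
    by (simp add: Complex_eq exp_add[symmetric] algebra_simps)
  also have "\<dots> = rcis (r powr q) (q * t)"
    using assms by (simp add: rcis_def cis_conv_exp powr_def exp_of_real[symmetric])
  finally show ?thesis .
qed

lemma cnj_rcis: "cnj (rcis r t) = rcis r (- t)"
  by (simp add: rcis_def cis_cnj)

lemma rcis_pi_half: "rcis r (pi / 2) = \<i> * complex_of_real r" "rcis r (- (pi / 2)) = - \<i> * complex_of_real r"
  by (simp_all add: rcis_def mult.commute)

lemma MVT_between:
  fixes f f' :: "real \<Rightarrow> real"
  assumes "\<And>z. min x y \<le> z \<Longrightarrow> z \<le> max x y \<Longrightarrow> (f has_real_derivative f' z) (at z)"
  shows "\<exists>z. min x y \<le> z \<and> z \<le> max x y \<and> f y - f x = (y - x) * f' z"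
proof (cases x y rule: linorder_cases)
  case less
  then show ?thesis
    using MVT2[of x y f f'] assms by (auto intro: less_imp_le)
next
  case greater
  then obtain z where "y < z" "z < x" "f x - f y = (x - y) * f' z"
    using MVT2[of y x f f'] assms by auto
  then show ?thesis
    using greater by (intro exI[of _ z]) (auto simp: algebra_simps)
qed auto

lemma IVT_pos_reals:
  fixes f :: "real \<Rightarrow> real"
  assumes "continuous_on {0<..} f" "x > 0" "y > 0" "f x \<le> v" "v \<le> f y"
  shows "\<exists>z>0. f z = v"
proof -
  have cont: "continuous_on {min x y..max x y} f"
    using assms(1) by (rule continuous_on_subset) (use assms(2,3) in auto)
  obtain z where "min x y \<le> z" "f z = v"
  proof (cases "x \<le> y")
    case True
    then show ?thesis using IVT'[of f x v y] cont assms(4,5) that by auto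
  next
    case False
    then show ?thesis using IVT2'[where f = f and a = y and b = x and y = v] cont assms(4,5) that by auto
  qed
  moreover have "min x y > 0" using assms(2,3) by simp
  ultimately show ?thesis by (intro exI[of _ z]) auto
qed

lemma IVT_pos_reals_eventually:
  fixes f :: "real \<Rightarrow> real"
  assumes "continuous_on {0<..} f"
    and "\<forall>\<^sub>F x in at_right 0. f x < v" and "\<forall>\<^sub>F x in at_top. f x > v"
  shows "\<exists>z>0. f z = v"
proof -
  have "\<forall>\<^sub>F x in at_right 0. x > 0 \<and> f x < v"
    using assms(2) by (intro eventually_conj) (simp_all add: eventually_at_right_less)
  then obtain x where "x > 0" "f x < v"
    using eventually_happens[of _ "at_right (0::real)"] by auto
  moreover have "\<forall>\<^sub>F x in at_top. x > 0 \<and> f x > v"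
    using assms(3) by (intro eventually_conj) (simp_all add: eventually_gt_at_top)
  then obtain y where "y > 0" "f y > v"
    using eventually_happens[of _ "at_top :: real filter"] by auto
  ultimately show ?thesis
    using IVT_pos_reals[OF assms(1), of x y v] by simp
qed

lemma powr_difference_strict_mono:
  fixes \<alpha> \<beta> \<gamma> p q :: real
  assumes "\<alpha> > 0" "\<beta> > 0" "p > 0" "q > 0"
  shows "strict_mono_on {0<..} (\<lambda>x. \<alpha> * x powr p - \<beta> * x powr (- q) - \<gamma>)"
proof (rule strict_mono_onI)
  fix x y :: real assume "x \<in> {0<..}" "x < y"
  then have "x powr p < y powr p" "y powr (- q) < x powr (- q)"
    using assms by (simp_all add: powr_less_mono2 powr_less_mono2_neg)
  then show "\<alpha> * x powr p - \<beta> * x powr (- q) - \<gamma> < \<alpha> * y powr p - \<beta> * y powr (- q) - \<gamma>"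
    using assms by (intro diff_strict_right_mono diff_strict_mono mult_strict_left_mono)
qed

lemma powr_difference_has_root:
  fixes \<alpha> \<beta> \<gamma> p q :: real
  assumes "\<alpha> > 0" "\<beta> > 0" "p > 0" "q > 0"
  shows "\<exists>x>0. \<alpha> * x powr p - \<beta> * x powr (- q) - \<gamma> = 0"
proof (rule IVT_pos_reals_eventually)
  show "continuous_on {0<..} (\<lambda>x. \<alpha> * x powr p - \<beta> * x powr (- q) - \<gamma>)"
    by (intro continuous_intros) auto
  have "filterlim (\<lambda>x. \<alpha> * x powr p - \<beta> * x powr (- q) - \<gamma>) at_bot (at_right 0)"
    using assms by real_asymp
  then show "\<forall>\<^sub>F x in at_right 0. \<alpha> * x powr p - \<beta> * x powr (- q) - \<gamma> < 0"
    unfolding filterlim_at_bot_dense by blast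
  have "filterlim (\<lambda>x. \<alpha> * x powr p - \<beta> * x powr (- q) - \<gamma>) at_top at_top"
    using assms by real_asymp
  then show "\<forall>\<^sub>F x in at_top. \<alpha> * x powr p - \<beta> * x powr (- q) - \<gamma> > 0"
    unfolding filterlim_at_top_dense by blast
qed

lemma tendsto_root_of_strict_mono:
  fixes g :: "'a \<Rightarrow> real \<Rightarrow> real" and g0 :: "real \<Rightarrow> real" and Z :: "'a \<Rightarrow> real"
  assumes roots: "\<forall>\<^sub>F s in F. Z s > 0 \<and> g s (Z s) = 0 \<and> strict_mono_on {0<..} (g s)"
    and lim: "\<And>r. r > 0 \<Longrightarrow> ((\<lambda>s. g s r) \<longlongrightarrow> g0 r) F"
    and "z > 0" "g0 z = 0" and mono: "strict_mono_on {0<..} g0"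
  shows "(Z \<longlongrightarrow> z) F"
proof (rule order_tendstoI)
  fix y assume "y < z"
  define x where "x = max y (z / 2)"
  have x: "0 < x" "x < z" "y \<le> x" using \<open>y < z\<close> \<open>z > 0\<close> by (auto simp: x_def)
  then have "g0 x < 0" using strict_mono_onD[OF mono, of x z] \<open>g0 z = 0\<close> by auto
  then have "\<forall>\<^sub>F s in F. g s x < 0" using lim[of x] x by (simp add: order_tendstoD)
  with roots show "\<forall>\<^sub>F s in F. y < Z s"
  proof eventually_elim
    case (elim s)
    have "Z s \<le> x \<Longrightarrow> g s (Z s) \<le> g s x"
      using strict_mono_onD[of "{0<..}" "g s" "Z s" x] elim by (cases "Z s = x") auto
    then show ?case using elim x by linarith
  qed
next
  fix y assume "z < y"
  then have "g0 y > 0" using strict_mono_onD[OF mono, of z y] \<open>g0 z = 0\<close> \<open>z > 0\<close> by auto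
  then have "\<forall>\<^sub>F s in F. g s y > 0" using lim[of y] \<open>z < y\<close> \<open>z > 0\<close> by (simp add: order_tendstoD)
  with roots show "\<forall>\<^sub>F s in F. Z s < y"
  proof eventually_elim
    case (elim s)
    have "y \<le> Z s \<Longrightarrow> g s y \<le> g s (Z s)"
      using strict_mono_onD[of "{0<..}" "g s" y "Z s"] elim \<open>z < y\<close> \<open>z > 0\<close>
      by (cases "Z s = y") auto
    then show ?case using elim by linarith
  qed
qed

lemma tendsto_between:
  fixes f g \<xi> :: "'a \<Rightarrow> real"
  assumes "(f \<longlongrightarrow> L) F" "(g \<longlongrightarrow> L) F"
    and "\<forall>\<^sub>F x in F. min (f x) (g x) \<le> \<xi> x \<and> \<xi> x \<le> max (f x) (g x)"
  shows "(\<xi> \<longlongrightarrow> L) F"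
proof (rule tendsto_sandwich)
  show "\<forall>\<^sub>F x in F. min (f x) (g x) \<le> \<xi> x" "\<forall>\<^sub>F x in F. \<xi> x \<le> max (f x) (g x)"
    using assms(3) by (simp_all add: eventually_conj_iff)
  show "((\<lambda>x. min (f x) (g x)) \<longlongrightarrow> L) F" "((\<lambda>x. max (f x) (g x)) \<longlongrightarrow> L) F"
    using tendsto_min[OF assms(1,2)] tendsto_max[OF assms(1,2)] by simp_all
qed

lemma implicit_root_mean_values:
  fixes F F_r :: "real \<Rightarrow> real \<Rightarrow> real" and F_t R :: "real \<Rightarrow> real"
  assumes "t0 \<in> T"
    and root: "\<And>t. t \<in> T \<Longrightarrow> R t > 0 \<and> F (R t) t = 0"
    and deriv_r: "\<And>r t. r > 0 \<Longrightarrow> t \<in> T \<Longrightarrow> ((\<lambda>r. F r t) has_real_derivative F_r r t) (at r)"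
    and deriv_t: "\<And>t. ((\<lambda>t. F (R t0) t) has_real_derivative F_t t) (at t)"
  obtains \<xi> \<eta> where "\<And>t. t \<in> T \<Longrightarrow> min (R t0) (R t) \<le> \<xi> t \<and> \<xi> t \<le> max (R t0) (R t)
      \<and> min t0 t \<le> \<eta> t \<and> \<eta> t \<le> max t0 t \<and> (R t - R t0) * F_r (\<xi> t) t = - ((t - t0) * F_t (\<eta> t))"
proof -
  have "\<exists>\<xi> \<eta>. t \<in> T \<longrightarrow> min (R t0) (R t) \<le> \<xi> \<and> \<xi> \<le> max (R t0) (R t)
      \<and> min t0 t \<le> \<eta> \<and> \<eta> \<le> max t0 t \<and> (R t - R t0) * F_r \<xi> t = - ((t - t0) * F_t \<eta>)" for t
  proof (cases "t \<in> T")
    case True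
    have "min (R t0) (R t) > 0" using root True assms(1) by simp
    then have "\<exists>\<xi>. min (R t0) (R t) \<le> \<xi> \<and> \<xi> \<le> max (R t0) (R t)
        \<and> F (R t) t - F (R t0) t = (R t - R t0) * F_r \<xi> t"
      using True by (intro MVT_between[where f = "\<lambda>r. F r t"] deriv_r) auto
    then obtain \<xi> where \<xi>: "min (R t0) (R t) \<le> \<xi>" "\<xi> \<le> max (R t0) (R t)"
      "F (R t) t - F (R t0) t = (R t - R t0) * F_r \<xi> t"
      by blast
    obtain \<eta> where \<eta>: "min t0 t \<le> \<eta>" "\<eta> \<le> max t0 t"
      "F (R t0) t - F (R t0) t0 = (t - t0) * F_t \<eta>"
      using MVT_between[of t0 t "F (R t0)" F_t] deriv_t by blast
    have "F (R t) t = 0" "F (R t0) t0 = 0" using root True assms(1) by simp_all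
    then have "(R t - R t0) * F_r \<xi> t = - ((t - t0) * F_t \<eta>)"
      using \<xi>(3) \<eta>(3) by linarith
    then show ?thesis using \<xi>(1,2) \<eta>(1,2) by blast
  qed simp
  then show ?thesis using that by metis
qed

lemma has_real_derivative_implicit_root:
  fixes F F_r :: "real \<Rightarrow> real \<Rightarrow> real" and F_t R :: "real \<Rightarrow> real"
  assumes "open T" "t0 \<in> T"
    and root: "\<And>t. t \<in> T \<Longrightarrow> R t > 0 \<and> F (R t) t = 0"
    and "isCont R t0"
    and deriv_r: "\<And>r t. r > 0 \<Longrightarrow> t \<in> T \<Longrightarrow> ((\<lambda>r. F r t) has_real_derivative F_r r t) (at r)"
    and deriv_t: "\<And>t. ((\<lambda>t. F (R t0) t) has_real_derivative F_t t) (at t)"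
    and "isCont (\<lambda>p. F_r (fst p) (snd p)) (R t0, t0)" and "isCont F_t t0"
    and "F_r (R t0) t0 \<noteq> 0"
  shows "(R has_real_derivative - F_t t0 / F_r (R t0) t0) (at t0)"
proof -
  obtain \<xi> \<eta> where mean: "\<And>t. t \<in> T \<Longrightarrow> min (R t0) (R t) \<le> \<xi> t \<and> \<xi> t \<le> max (R t0) (R t)
      \<and> min t0 t \<le> \<eta> t \<and> \<eta> t \<le> max t0 t \<and> (R t - R t0) * F_r (\<xi> t) t = - ((t - t0) * F_t (\<eta> t))"
    using implicit_root_mean_values[OF assms(2) root deriv_r deriv_t] by blast
  have "((\<lambda>t. t) \<longlongrightarrow> t0) (at t0)" by simp
  then have near: "\<forall>\<^sub>F t in at t0. t \<in> T"
    using assms(1,2) by (rule topological_tendstoD)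
  have "\<forall>\<^sub>F t in at t0. min (R t0) (R t) \<le> \<xi> t \<and> \<xi> t \<le> max (R t0) (R t)"
    using near by eventually_elim (use mean in blast)
  moreover have "(R \<longlongrightarrow> R t0) (at t0)"
    using \<open>isCont R t0\<close> by (simp add: isCont_def)
  ultimately have "(\<xi> \<longlongrightarrow> R t0) (at t0)"
    by (rule tendsto_between[OF tendsto_const, rotated])
  then have "((\<lambda>t. (\<xi> t, t)) \<longlongrightarrow> (R t0, t0)) (at t0)"
    by (intro tendsto_Pair tendsto_ident_at)
  from isCont_tendsto_compose[OF \<open>isCont (\<lambda>p. F_r (fst p) (snd p)) (R t0, t0)\<close> this]
  have F_r_lim: "((\<lambda>t. F_r (\<xi> t) t) \<longlongrightarrow> F_r (R t0) t0) (at t0)"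
    by simp
  have "\<forall>\<^sub>F t in at t0. min t0 t \<le> \<eta> t \<and> \<eta> t \<le> max t0 t"
    using near by eventually_elim (use mean in blast)
  then have "(\<eta> \<longlongrightarrow> t0) (at t0)"
    by (rule tendsto_between[OF tendsto_const tendsto_ident_at])
  then have "((\<lambda>t. F_t (\<eta> t)) \<longlongrightarrow> F_t t0) (at t0)"
    using \<open>isCont F_t t0\<close> isCont_tendsto_compose by blast
  with F_r_lim have lim: "((\<lambda>t. - F_t (\<eta> t) / F_r (\<xi> t) t) \<longlongrightarrow> - F_t t0 / F_r (R t0) t0) (at t0)"
    using \<open>F_r (R t0) t0 \<noteq> 0\<close> by (intro tendsto_intros)
  have "\<forall>\<^sub>F t in at t0. F_r (\<xi> t) t \<noteq> 0"
    using F_r_lim \<open>F_r (R t0) t0 \<noteq> 0\<close> by (rule tendsto_imp_eventually_ne)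
  moreover have "\<forall>\<^sub>F t in at t0. t \<noteq> t0"
    by (simp add: eventually_at_filter)
  ultimately have "\<forall>\<^sub>F t in at t0. - F_t (\<eta> t) / F_r (\<xi> t) t = (R t - R t0) / (t - t0)"
    using near by eventually_elim (use mean in \<open>auto simp: field_simps\<close>)
  with lim show ?thesis
    unfolding has_field_derivative_iff by (rule Lim_transform_eventually)
qed

lemma Re_powr_of_real:
  "s \<noteq> 0 \<Longrightarrow> Re (s powr complex_of_real p) = cmod s powr p * cos (p * Arg s)"
  using rcis_powr_of_real[of "cmod s" "Arg s" p] Arg_bounded[of s] by (simp add: rcis_cmod_Arg)

lemma abs_Arg_imaginary: "Re s = 0 \<Longrightarrow> s \<noteq> 0 \<Longrightarrow> \<bar>Arg s\<bar> = pi / 2"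
  using Arg_Re_nonneg[of s] Arg_Re_pos[of s] by linarith

lemma Re_powr_imaginary:
  assumes "Re s = 0" "s \<noteq> 0"
  shows "Re (s powr complex_of_real p) = cmod s powr p * cos (p * pi / 2)"
proof -
  have "cos (p * Arg s) = cos (p * \<bar>Arg s\<bar>)"
    by (cases "Arg s \<ge> 0") simp_all
  then show ?thesis
    using Re_powr_of_real[OF assms(2)] abs_Arg_imaginary[OF assms] by simp
qed

lemma cos_minus_one_half_pi: "cos ((p - 1) * pi / 2) = sin (p * pi / 2)"
proof -
  have "cos ((p - 1) * pi / 2) = cos (p * pi / 2 - pi / 2)"
    by (simp add: left_diff_distrib diff_divide_distrib)
  also have "\<dots> = sin (p * pi / 2)"
    by (simp add: cos_diff)
  finally show ?thesis .
qed

lemma Delta_at_0 [simp]: "Delta q1 q2 a b c 0 = complex_of_real c"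
  by (simp add: Delta_def)

locale frac_char =
  fixes q1 q2 b c :: real
  assumes q1_pos: "0 < q1" and q1_less_q2: "q1 < q2" and q2_less_1: "q2 < 1" and c_pos: "0 < c"
begin

definition G :: "complex \<Rightarrow> complex" where
  "G s = - (s powr complex_of_real q1 + complex_of_real b * s powr complex_of_real (q1 - q2)
            + complex_of_real c * s powr complex_of_real (- q2))"

definition X :: "real \<Rightarrow> real \<Rightarrow> real" where
  "X r t = - (r powr q1 * cos (q1 * t) + b * r powr (q1 - q2) * cos ((q2 - q1) * t)
              + c * r powr (- q2) * cos (q2 * t))"

definition H :: "real \<Rightarrow> real \<Rightarrow> real" where
  "H r t = r powr q2 * sin (q1 * t) - c * r powr (- q1) * sin (q2 * t) - b * sin ((q2 - q1) * t)"

definition X_r :: "real \<Rightarrow> real \<Rightarrow> real" where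
  "X_r r t = - (q1 * r powr (q1 - 1) * cos (q1 * t) + b * (q1 - q2) * r powr (q1 - q2 - 1) * cos ((q2 - q1) * t)
                - c * q2 * r powr (- q2 - 1) * cos (q2 * t))"

definition X_t :: "real \<Rightarrow> real \<Rightarrow> real" where
  "X_t r t = q1 * r powr q1 * sin (q1 * t) + b * (q2 - q1) * r powr (q1 - q2) * sin ((q2 - q1) * t)
             + c * q2 * r powr (- q2) * sin (q2 * t)"

definition H_r :: "real \<Rightarrow> real \<Rightarrow> real" where
  "H_r r t = q2 * r powr (q2 - 1) * sin (q1 * t) + c * q1 * r powr (- q1 - 1) * sin (q2 * t)"

definition H_t :: "real \<Rightarrow> real \<Rightarrow> real" where
  "H_t r t = q1 * r powr q2 * cos (q1 * t) - c * q2 * r powr (- q1) * cos (q2 * t)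
             - b * (q2 - q1) * cos ((q2 - q1) * t)"

lemma Delta_eq_powr_mult:
  assumes "s \<noteq> 0"
  shows "Delta q1 q2 a b c s = s powr complex_of_real q2 * (complex_of_real a - G s)"
proof -
  define P where "P = s powr complex_of_real q2"
  define U where "U = s powr complex_of_real (q1 - q2)"
  define W where "W = s powr complex_of_real (- q2)"
  have sum: "s powr complex_of_real (q1 + q2) = s powr complex_of_real q1 * P"
    by (simp add: P_def powr_add)
  have diff: "s powr complex_of_real q1 = U * P"
    by (simp add: P_def U_def powr_add[symmetric])
  have inv: "W * P = 1"
    using assms by (simp add: P_def W_def powr_add[symmetric])
  have "Delta q1 q2 a b c s = U * P * P + complex_of_real a * P + complex_of_real b * (U * P)
      + complex_of_real c * (W * P)"
    unfolding Delta_def sum inv P_def[symmetric] by (simp only: diff mult_1_right)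
  also have "\<dots> = P * (complex_of_real a - G s)"
    unfolding G_def P_def[symmetric] U_def[symmetric] W_def[symmetric] diff by (simp add: algebra_simps)
  finally show ?thesis unfolding P_def .
qed

lemma root_nonzero: "Delta q1 q2 a b c s = 0 \<Longrightarrow> s \<noteq> 0"
  using c_pos by auto

lemma Delta_eq_0_iff:
  assumes "s \<noteq> 0"
  shows "Delta q1 q2 a b c s = 0 \<longleftrightarrow> G s = complex_of_real a"
proof -
  have "s powr complex_of_real q2 \<noteq> 0" using assms by (simp add: powr_def)
  then show ?thesis using assms by (simp add: Delta_eq_powr_mult) (rule eq_commute)
qed

lemma G_rcis:
  assumes "r > 0" "t \<in> {-pi<..pi}"
  shows "G (rcis r t) = Complex (X r t) (- (r powr (q1 - q2) * H r t))"
proof -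
  have "r powr q1 = r powr (q1 - q2) * r powr q2" "r powr (- q2) = r powr (q1 - q2) * r powr (- q1)"
    by (simp_all add: powr_add[symmetric])
  moreover have "(q1 - q2) * t = - ((q2 - q1) * t)" by (simp add: algebra_simps)
  then have "cos ((q1 - q2) * t) = cos ((q2 - q1) * t)" "sin ((q1 - q2) * t) = - sin ((q2 - q1) * t)"
    by (simp_all only: cos_minus sin_minus)
  ultimately show ?thesis
    unfolding G_def rcis_powr_of_real[OF assms] X_def H_def
    by (simp add: complex_eq_iff algebra_simps)
qed

lemma Delta_rcis_eq_0_iff:
  assumes "r > 0" "t \<in> {-pi<..pi}"
  shows "Delta q1 q2 a b c (rcis r t) = 0 \<longleftrightarrow> X r t = a \<and> H r t = 0"
proof -
  have "rcis r t \<noteq> 0" using assms by simp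
  then have "Delta q1 q2 a b c (rcis r t) = 0 \<longleftrightarrow>
      Complex (X r t) (- (r powr (q1 - q2) * H r t)) = complex_of_real a"
    using Delta_eq_0_iff G_rcis[OF assms] by simp
  also have "\<dots> \<longleftrightarrow> X r t = a \<and> H r t = 0"
    using assms by (simp add: complex_eq_iff)
  finally show ?thesis .
qed

lemma X_minus: "X r (- t) = X r t" and H_minus: "H r (- t) = - H r t"
  unfolding X_def H_def by simp_all

lemma sin_pos:
  assumes "0 < t" "t < pi"
  shows "sin (q1 * t) > 0" "sin (q2 * t) > 0" "sin ((q2 - q1) * t) > 0"
proof -
  have "q1 * t < pi" "q2 * t < pi" "(q2 - q1) * t < pi"
    using assms q1_pos q1_less_q2 q2_less_1
    by (smt (verit) mult_less_cancel_right2)+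
  then show "sin (q1 * t) > 0" "sin (q2 * t) > 0" "sin ((q2 - q1) * t) > 0"
    using assms q1_pos q1_less_q2 by (auto intro!: sin_gt_zero)
qed

lemma H_eq_powr_difference:
  "H r t = sin (q1 * t) * r powr q2 - (c * sin (q2 * t)) * r powr (- q1) - b * sin ((q2 - q1) * t)"
  unfolding H_def by (simp add: algebra_simps)

lemma H_strict_mono: "t \<in> {0<..<pi} \<Longrightarrow> strict_mono_on {0<..} (\<lambda>r. H r t)"
  unfolding H_eq_powr_difference using sin_pos[of t] c_pos q1_pos q1_less_q2
  by (intro powr_difference_strict_mono) auto

lemma H_has_root: "t \<in> {0<..<pi} \<Longrightarrow> \<exists>r>0. H r t = 0"
  unfolding H_eq_powr_difference using sin_pos[of t] c_pos q1_pos q1_less_q2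
  by (intro powr_difference_has_root) auto

definition radius :: "real \<Rightarrow> real" where
  "radius t = (THE r. r > 0 \<and> H r t = 0)"

lemma H_root_unique:
  assumes "t \<in> {0<..<pi}" "x > 0" "y > 0" "H x t = 0" "H y t = 0"
  shows "x = y"
  using strict_mono_on_eqD[OF H_strict_mono[OF assms(1)]] assms by auto

lemma radius_pos: "t \<in> {0<..<pi} \<Longrightarrow> radius t > 0"
  and H_radius: "t \<in> {0<..<pi} \<Longrightarrow> H (radius t) t = 0"
  using theI'[of "\<lambda>r. r > 0 \<and> H r t = 0"] H_has_root H_root_unique unfolding radius_def by blast+

lemma radius_eqI: "t \<in> {0<..<pi} \<Longrightarrow> r > 0 \<Longrightarrow> H r t = 0 \<Longrightarrow> radius t = r"
  using H_root_unique radius_pos H_radius by blast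

lemma H_has_derivative_r: "r > 0 \<Longrightarrow> ((\<lambda>r. H r t) has_real_derivative H_r r t) (at r)"
  unfolding H_def H_r_def by (rule derivative_eq_intros refl | simp)+

lemma H_has_derivative_t: "((\<lambda>t. H r t) has_real_derivative H_t r t) (at t)"
  unfolding H_def H_t_def by (rule derivative_eq_intros refl | simp)+

lemma X_has_derivative_r: "r > 0 \<Longrightarrow> ((\<lambda>r. X r t) has_real_derivative X_r r t) (at r)"
  unfolding X_def X_r_def by (rule derivative_eq_intros refl | simp)+

lemma X_along_has_derivative:
  assumes "(R has_real_derivative R') (at t)" "R t > 0"
  shows "((\<lambda>t. X (R t) t) has_real_derivative X_r (R t) t * R' + X_t (R t) t) (at t)"
  unfolding X_def X_r_def X_t_def
  by (rule derivative_eq_intros refl assms | simp add: assms)+ (simp add: algebra_simps)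

lemma powr_shifts:
  assumes "r > 0"
  shows "r powr (q1 - q2) = r powr q1 / r powr q2" "r powr (- q2) = 1 / r powr q2"
    "r powr (- q1) = 1 / r powr q1" "r powr (q2 - 1) = r powr q2 / r"
    "r powr (- q1 - 1) = 1 / (r powr q1 * r)" "r powr (q1 - 1) = r powr q1 / r"
    "r powr (q1 - q2 - 1) = r powr q1 / (r powr q2 * r)" "r powr (- q2 - 1) = 1 / (r powr q2 * r)"
    "r powr (q1 - q2 + 1) = r powr q1 * r / r powr q2"
  using assms by (simp_all add: powr_diff powr_add powr_minus_divide)

text \<open>The Cauchy--Riemann equations for \<^const>\<open>G\<close> in polar coordinates.\<close>

lemma X_r_eq: "r > 0 \<Longrightarrow> X_r r t = - (r powr (q1 - q2 - 1) * H_t r t)"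
  unfolding X_r_def H_t_def by (simp only: powr_shifts) (simp add: field_simps)

lemma X_t_eq: "r > 0 \<Longrightarrow> X_t r t = r powr (q1 - q2 + 1) * H_r r t - (q2 - q1) * r powr (q1 - q2) * H r t"
  unfolding X_t_def H_r_def H_def by (simp only: powr_shifts) (simp add: field_simps)

lemma H_r_pos: "r > 0 \<Longrightarrow> t \<in> {0<..<pi} \<Longrightarrow> H_r r t > 0"
  unfolding H_r_def using sin_pos[of t] q1_pos q1_less_q2 c_pos
  by (intro add_pos_pos mult_pos_pos) auto

lemma isCont_radius:
  assumes "t0 \<in> {0<..<pi}"
  shows "isCont radius t0"
proof -
  have "\<forall>\<^sub>F t in at t0. t \<in> {0<..<pi}"
    using assms by (intro eventually_at_in_open') auto
  then have "\<forall>\<^sub>F t in at t0. radius t > 0 \<and> H (radius t) t = 0 \<and> strict_mono_on {0<..} (\<lambda>r. H r t)"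
    by eventually_elim (use radius_pos H_radius H_strict_mono in auto)
  moreover have "((\<lambda>t. H r t) \<longlongrightarrow> H r t0) (at t0)" for r
    unfolding H_def by (intro tendsto_intros)
  ultimately have "(radius \<longlongrightarrow> radius t0) (at t0)"
    by (rule tendsto_root_of_strict_mono[where g = "\<lambda>t r. H r t",
          OF _ _ radius_pos[OF assms] H_radius[OF assms] H_strict_mono[OF assms]])
  then show ?thesis by (simp add: isCont_def)
qed

lemma radius_has_derivative:
  assumes "t0 \<in> {0<..<pi}"
  shows "(radius has_real_derivative - H_t (radius t0) t0 / H_r (radius t0) t0) (at t0)"
proof (rule has_real_derivative_implicit_root[where F = H and F_r = H_r and F_t = "H_t (radius t0)"])
  have "radius t0 > 0" using radius_pos assms .
  then show "isCont (\<lambda>p. H_r (fst p) (snd p)) (radius t0, t0)"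
    unfolding H_r_def by (intro continuous_intros) auto
  show "isCont (\<lambda>t. H_t (radius t0) t) t0"
    unfolding H_t_def by (intro continuous_intros)
  show "H_r (radius t0) t0 \<noteq> 0"
    using H_r_pos radius_pos assms by (metis less_irrefl)
  show "\<And>t. t \<in> {0<..<pi} \<Longrightarrow> radius t > 0 \<and> H (radius t) t = 0"
    using radius_pos H_radius by blast
qed (use assms isCont_radius H_has_derivative_r H_has_derivative_t in simp_all)

definition a_at :: "real \<Rightarrow> real" where
  "a_at t = X (radius t) t"

lemma a_at_has_pos_derivative:
  assumes "t \<in> {0<..<pi}"
  shows "\<exists>D. (a_at has_real_derivative D) (at t) \<and> D > 0"
proof -
  define r where "r = radius t"
  have r: "r > 0" "H r t = 0" "H_r r t > 0"
    using radius_pos H_radius H_r_pos assms by (auto simp: r_def)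
  have "(a_at has_real_derivative X_r r t * (- H_t r t / H_r r t) + X_t r t) (at t)"
    unfolding a_at_def r_def
    by (rule X_along_has_derivative[OF radius_has_derivative[OF assms] radius_pos[OF assms]])
  moreover have "X_r r t * (- H_t r t / H_r r t) + X_t r t
      = r powr (q1 - q2 - 1) * ((H_t r t)\<^sup>2 / H_r r t) + r powr (q1 - q2 + 1) * H_r r t"
    unfolding X_r_eq[OF r(1)] X_t_eq[OF r(1)] r(2) using r(3) by (simp add: power2_eq_square field_simps)
  moreover have "r powr (q1 - q2 - 1) * ((H_t r t)\<^sup>2 / H_r r t) \<ge> 0"
    using r by simp
  moreover have "r powr (q1 - q2 + 1) * H_r r t > 0"
    using r by simp
  ultimately show ?thesis by (intro exI) auto
qed

lemma isCont_a_at: "t \<in> {0<..<pi} \<Longrightarrow> isCont a_at t"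
  using a_at_has_pos_derivative DERIV_isCont by blast

lemma a_at_strict_mono: "strict_mono_on {0<..<pi} a_at"
proof (rule strict_mono_onI)
  fix x y assume "x \<in> {0<..<pi}" "y \<in> {0<..<pi}" "x < y"
  then have sub: "t \<in> {0<..<pi}" if "x \<le> t" "t \<le> y" for t
    using that by auto
  then have "continuous_on {x..y} a_at"
    by (intro continuous_at_imp_continuous_on ballI isCont_a_at) auto
  moreover have "\<exists>D. (a_at has_real_derivative D) (at t) \<and> D > 0" if "x < t" "t < y" for t
    using that by (intro a_at_has_pos_derivative sub) auto
  ultimately show "a_at x < a_at y"
    using DERIV_pos_imp_increasing_open[OF \<open>x < y\<close>, of a_at] by blast
qed

lemma a_at_less: "0 < x \<Longrightarrow> x < y \<Longrightarrow> y < pi \<Longrightarrow> a_at x < a_at y"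
  using strict_mono_onD[OF a_at_strict_mono, of x y] by simp

lemma H_t_0_eq: "H_t r 0 = q1 * r powr q2 - (c * q2) * r powr (- q1) - b * (q2 - q1)"
  unfolding H_t_def by simp

lemma H_t_0_strict_mono: "strict_mono_on {0<..} (\<lambda>r. H_t r 0)"
  unfolding H_t_0_eq using q1_pos q1_less_q2 c_pos by (intro powr_difference_strict_mono) auto

text \<open>\<open>X r 0\<close> is maximal at \<open>r_peak\<close>, since \<open>X_r r 0 = - r powr (q1 - q2 - 1) * H_t r 0\<close>;
  its maximum \<open>a_peak\<close> is also the limit of \<^const>\<open>a_at\<close> at \<open>0\<close>.\<close>

definition r_peak :: real where
  "r_peak = (THE r. r > 0 \<and> H_t r 0 = 0)"

lemma r_peak_pos: "r_peak > 0" and H_t_r_peak: "H_t r_peak 0 = 0"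
proof -
  have "\<exists>!r. r > 0 \<and> H_t r 0 = 0"
  proof (rule ex_ex1I)
    show "\<exists>r. r > 0 \<and> H_t r 0 = 0"
      unfolding H_t_0_eq using q1_pos q1_less_q2 c_pos powr_difference_has_root[of q1 "c * q2" q2 q1] by auto
  qed (use strict_mono_on_eqD[OF H_t_0_strict_mono] in auto)
  from theI'[OF this] show "r_peak > 0" "H_t r_peak 0 = 0"
    unfolding r_peak_def by auto
qed

lemma radius_tendsto_r_peak: "(radius \<longlongrightarrow> r_peak) (at_right 0)"
proof (rule tendsto_root_of_strict_mono[where g = "\<lambda>t r. H r t / t"])
  have "\<forall>\<^sub>F t in at_right 0. t \<in> {0<..<pi}"
    by (rule eventually_at_right_real) simp
  then show "\<forall>\<^sub>F t in at_right 0. radius t > 0 \<and> H (radius t) t / t = 0 \<and>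
      strict_mono_on {0<..} (\<lambda>r. H r t / t)"
  proof eventually_elim
    case (elim t)
    have "strict_mono_on {0<..} (\<lambda>r. H r t / t)"
      using strict_mono_onD[OF H_strict_mono[OF elim]] elim
      by (intro strict_mono_onI divide_strict_right_mono) auto
    then show ?case using radius_pos H_radius elim by simp
  qed
  show "((\<lambda>t. H r t / t) \<longlongrightarrow> H_t r 0) (at_right 0)" for r
    unfolding H_def H_t_def by real_asymp
qed (use r_peak_pos H_t_r_peak H_t_0_strict_mono in auto)

definition a_peak :: real where
  "a_peak = X r_peak 0"

lemma a_at_tendsto_a_peak: "(a_at \<longlongrightarrow> a_peak) (at_right 0)"
  unfolding a_at_def[abs_def] a_peak_def X_def using r_peak_pos
  by (intro tendsto_intros radius_tendsto_r_peak) auto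

lemma a_peak_less_a_at:
  assumes "t \<in> {0<..<pi}"
  shows "a_peak < a_at t"
proof -
  have "a_peak \<le> a_at (t / 2)"
  proof (rule tendsto_upperbound[OF a_at_tendsto_a_peak])
    show "\<forall>\<^sub>F s in at_right 0. a_at s \<le> a_at (t / 2)"
      using eventually_at_right_real[of 0 "t / 2"] assms
      by (auto elim!: eventually_mono intro!: less_imp_le a_at_less)
  qed simp
  also have "\<dots> < a_at t"
    using assms by (intro a_at_less) auto
  finally show ?thesis .
qed

lemma X_0_le_a_peak:
  assumes "r > 0"
  shows "X r 0 \<le> a_peak"
proof -
  have cont: "continuous_on {x..y} (\<lambda>r. X r 0)" if "x > 0" for x y
    unfolding X_def using that by (intro continuous_intros) auto
  have deriv: "((\<lambda>r. X r 0) has_real_derivative - (z powr (q1 - q2 - 1) * H_t z 0)) (at z)"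
    if "z > 0" for z
    using X_has_derivative_r[OF that] X_r_eq[OF that] by simp
  have H_t_sign: "H_t z 0 < 0 \<longleftrightarrow> z < r_peak" if "z > 0" for z
    using strict_mono_on_less[OF H_t_0_strict_mono] that r_peak_pos H_t_r_peak by fastforce
  show ?thesis
  proof (cases "r \<le> r_peak")
    case True
    have "\<exists>D. ((\<lambda>r. X r 0) has_real_derivative D) (at z) \<and> D \<ge> 0" if "r < z" "z < r_peak" for z
    proof -
      have "z > 0" using that assms by simp
      moreover have "z powr (q1 - q2 - 1) * H_t z 0 < 0"
        using \<open>z > 0\<close> H_t_sign that by (intro mult_pos_neg) auto
      ultimately show ?thesis using deriv by fastforce
    qed
    then show ?thesis
      using DERIV_nonneg_imp_increasing_open[OF True _ cont[OF assms]] by (simp add: a_peak_def)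
  next
    case False
    have "\<exists>D. ((\<lambda>r. X r 0) has_real_derivative D) (at z) \<and> D \<le> 0" if "r_peak < z" "z < r" for z
    proof -
      have "z > 0" using that r_peak_pos by simp
      moreover have "z powr (q1 - q2 - 1) * H_t z 0 \<ge> 0"
        using \<open>z > 0\<close> H_t_sign[of z] that by (intro mult_nonneg_nonneg) auto
      ultimately show ?thesis using deriv by fastforce
    qed
    then show ?thesis
      using DERIV_nonpos_imp_decreasing_open[OF _ _ cont[OF r_peak_pos]] False
      by (simp add: a_peak_def)
  qed
qed

lemma Delta_eq_0_iff_polar:
  assumes "s \<noteq> 0"
  shows "Delta q1 q2 a b c s = 0 \<longleftrightarrow> X (cmod s) \<bar>Arg s\<bar> = a \<and> H (cmod s) \<bar>Arg s\<bar> = 0"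
proof -
  have "Delta q1 q2 a b c s = 0 \<longleftrightarrow> X (cmod s) (Arg s) = a \<and> H (cmod s) (Arg s) = 0"
    using Delta_rcis_eq_0_iff[of "cmod s" "Arg s"] assms Arg_bounded[of s]
    by (simp add: rcis_cmod_Arg)
  then show ?thesis by (cases "Arg s \<ge> 0") (auto simp: X_minus H_minus dest: arg_cong[of _ _ uminus])
qed

lemma root_Re_nonneg_le_a_at:
  assumes "Delta q1 q2 a b c s = 0" "Re s \<ge> 0"
  shows "a \<le> a_at (pi / 2)" and "Re s > 0 \<Longrightarrow> a < a_at (pi / 2)"
proof -
  define r t where "r = cmod s" and "t = \<bar>Arg s\<bar>"
  have r: "r > 0"
    using root_nonzero[OF assms(1)] by (simp add: r_def)
  have t: "0 \<le> t" "t \<le> pi / 2"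
    using Arg_Re_nonneg[of s] assms(2) by (simp_all add: t_def)
  have root: "X r t = a" "H r t = 0"
    using Delta_eq_0_iff_polar[OF root_nonzero[OF assms(1)]] assms(1) by (simp_all add: r_def t_def)
  have a_at_t: "a = a_at t" if "0 < t"
    using radius_eqI[of t r] that t r root pi_gt_zero by (simp add: a_at_def)
  have less: "a < a_at (pi / 2)" if "t < pi / 2"
  proof (cases "t = 0")
    case True
    then have "a \<le> a_peak" using X_0_le_a_peak r root by auto
    also have "a_peak < a_at (pi / 2)" by (rule a_peak_less_a_at) simp
    finally show ?thesis .
  next
    case False
    then show ?thesis
      using a_at_t t that a_at_less[of t "pi / 2"] by simp
  qed
  show "a \<le> a_at (pi / 2)"
  proof (cases "t < pi / 2")
    case False
    then have "t = pi / 2" using t by simp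
    then show ?thesis using a_at_t pi_gt_zero by (simp only:)
  qed (use less in auto)
  show "Re s > 0 \<Longrightarrow> a < a_at (pi / 2)"
    using less Arg_Re_pos[of s] by (simp add: t_def)
qed

lemma real_root_if_le_a_peak:
  assumes "a \<le> a_peak"
  shows "\<exists>x>0. Delta q1 q2 a b c (complex_of_real x) = 0"
proof -
  have "filterlim (\<lambda>r. X r 0) at_bot at_top"
    unfolding X_def using q1_pos q1_less_q2 c_pos by real_asymp
  then have "\<forall>\<^sub>F r in at_top. r > 0 \<and> X r 0 < a"
    by (intro eventually_conj) (simp_all add: filterlim_at_bot_dense eventually_gt_at_top)
  then obtain y where "y > 0" "X y 0 < a"
    using eventually_happens[of _ "at_top :: real filter"] by auto
  moreover have "continuous_on {0<..} (\<lambda>r. X r 0)"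
    unfolding X_def by (intro continuous_intros) auto
  ultimately obtain x where "x > 0" "X x 0 = a"
    using IVT_pos_reals[of "\<lambda>r. X r 0" y r_peak a] r_peak_pos assms by (auto simp: a_peak_def)
  then show ?thesis
    using Delta_rcis_eq_0_iff[of x 0 a] by (auto simp: H_def)
qed

lemma right_half_plane_roots_if_less_a_at:
  assumes "a < a_at (pi / 2)"
  shows "\<exists>s. Re s > 0 \<and> Delta q1 q2 a b c s = 0 \<and> Delta q1 q2 a b c (cnj s) = 0"
proof (cases "a \<le> a_peak")
  case True
  then obtain x where "x > 0" "Delta q1 q2 a b c (complex_of_real x) = 0"
    using real_root_if_le_a_peak by blast
  then show ?thesis by (intro exI[of _ "complex_of_real x"]) simp
next
  case False
  then have "\<forall>\<^sub>F t in at_right 0. a_at t < a \<and> t \<in> {0<..<pi / 2}"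
    using a_at_tendsto_a_peak
    by (intro eventually_conj order_tendstoD eventually_at_right_real) auto
  then obtain p where p: "a_at p < a" "0 < p" "p < pi / 2"
    using eventually_happens[of _ "at_right (0::real)"] by auto
  have "continuous_on {p..pi / 2} a_at"
    using p by (intro continuous_at_imp_continuous_on ballI isCont_a_at) auto
  then obtain t where t: "p \<le> t" "t \<le> pi / 2" "a_at t = a"
    using IVT'[of a_at p a "pi / 2"] p assms by auto
  then have "t < pi / 2" using assms by (cases "t = pi / 2") auto
  define r where "r = radius t"
  have r: "r > 0" "H r t = 0" "X r t = a"
    using radius_pos H_radius t p \<open>t < pi / 2\<close> by (auto simp: r_def a_at_def[symmetric])
  have "Delta q1 q2 a b c (rcis r t) = 0" "Delta q1 q2 a b c (rcis r (- t)) = 0"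
    using r t p \<open>t < pi / 2\<close> by (simp_all add: Delta_rcis_eq_0_iff X_minus H_minus)
  moreover have "Re (rcis r t) > 0"
    using r t p \<open>t < pi / 2\<close> by (simp add: cos_gt_zero_pi)
  ultimately show ?thesis by (intro exI[of _ "rcis r t"]) (simp add: cnj_rcis)
qed

lemma imaginary_roots_iff:
  "(\<exists>\<omega>::real. \<omega> > 0 \<and> Delta q1 q2 a b c (\<i> * complex_of_real \<omega>) = 0
      \<and> Delta q1 q2 a b c (- \<i> * complex_of_real \<omega>) = 0) \<longleftrightarrow> a = a_at (pi / 2)"
proof -
  have "- pi < - (pi / 2)" "- (pi / 2) \<le> pi" using pi_gt_zero by linarith+
  then have roots: "Delta q1 q2 a b c (\<i> * complex_of_real \<omega>) = 0 \<and> Delta q1 q2 a b c (- \<i> * complex_of_real \<omega>) = 0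
      \<longleftrightarrow> X \<omega> (pi / 2) = a \<and> H \<omega> (pi / 2) = 0" if "\<omega> > 0" for \<omega>
    using Delta_rcis_eq_0_iff[of \<omega> "pi / 2" a] Delta_rcis_eq_0_iff[of \<omega> "- (pi / 2)" a] that
    by (auto simp: rcis_pi_half X_minus H_minus)
  show ?thesis
  proof
    assume "\<exists>\<omega>. \<omega> > 0 \<and> Delta q1 q2 a b c (\<i> * complex_of_real \<omega>) = 0
      \<and> Delta q1 q2 a b c (- \<i> * complex_of_real \<omega>) = 0"
    then obtain \<omega> where "\<omega> > 0" "X \<omega> (pi / 2) = a" "H \<omega> (pi / 2) = 0"
      using roots by blast
    then show "a = a_at (pi / 2)"
      using radius_eqI[of "pi / 2" \<omega>] by (simp add: a_at_def)
  next
    assume "a = a_at (pi / 2)"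
    then show "\<exists>\<omega>. \<omega> > 0 \<and> Delta q1 q2 a b c (\<i> * complex_of_real \<omega>) = 0
      \<and> Delta q1 q2 a b c (- \<i> * complex_of_real \<omega>) = 0"
      using roots[of "radius (pi / 2)"] radius_pos[of "pi / 2"] H_radius[of "pi / 2"]
      by (auto simp: a_at_def)
  qed
qed

lemma X_mult_sin_eq:
  assumes "r > 0" "H r t = 0"
  shows "X r t * sin ((q2 - q1) * t) = c * r powr (- q2) * sin (q1 * t) - r powr q1 * sin (q2 * t)"
proof -
  define u v where "u = r powr q1" and "v = r powr q2"
  have uv: "u > 0" "v > 0" using assms by (auto simp: u_def v_def)
  have sin_q2: "sin (q2 * t) = sin (q1 * t) * cos ((q2 - q1) * t) + cos (q1 * t) * sin ((q2 - q1) * t)"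
    using sin_add[of "q1 * t" "(q2 - q1) * t"] by (simp add: algebra_simps)
  have sin_q1: "sin (q1 * t) = sin (q2 * t) * cos ((q2 - q1) * t) - cos (q2 * t) * sin ((q2 - q1) * t)"
    using sin_diff[of "q2 * t" "(q2 - q1) * t"] by (simp add: algebra_simps)
  have b: "b * sin ((q2 - q1) * t) = v * sin (q1 * t) - c / u * sin (q2 * t)"
    using assms(2) unfolding H_def powr_shifts[OF assms(1)] u_def v_def by simp
  have "X r t * sin ((q2 - q1) * t) = - (u * cos (q1 * t) * sin ((q2 - q1) * t)
      + u / v * cos ((q2 - q1) * t) * (b * sin ((q2 - q1) * t)) + c / v * cos (q2 * t) * sin ((q2 - q1) * t))"
    unfolding X_def powr_shifts[OF assms(1)] u_def v_def by (simp add: algebra_simps)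
  also have "\<dots> = - (u * (sin (q1 * t) * cos ((q2 - q1) * t) + cos (q1 * t) * sin ((q2 - q1) * t)))
      + c / v * (sin (q2 * t) * cos ((q2 - q1) * t) - cos (q2 * t) * sin ((q2 - q1) * t))"
    unfolding b using uv by (simp add: field_simps)
  also have "\<dots> = c / v * sin (q1 * t) - u * sin (q2 * t)"
    unfolding sin_q1[symmetric] sin_q2[symmetric] by simp
  finally show ?thesis
    unfolding u_def v_def powr_shifts[OF assms(1)] by simp
qed

lemma sin_pi_half_pos: "sin (q1 * pi / 2) > 0" "sin (q2 * pi / 2) > 0" "sin ((q2 - q1) * pi / 2) > 0"
  using sin_pos[of "pi / 2"] by simp_all

lemma H_pi_half_eq_0_iff:
  assumes "w > 0"
  shows "H w (pi / 2) = 0 \<longleftrightarrow> b = rho1 q1 q2 * w powr q2 - c * rho2 q1 q2 * w powr (- q1)"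
  using sin_pi_half_pos unfolding H_def rho1_def rho2_def by (auto simp: field_simps)

lemma X_pi_half_eq:
  assumes "w > 0" "H w (pi / 2) = 0"
  shows "X w (pi / 2) = c * rho1 q1 q2 * w powr (- q2) - rho2 q1 q2 * w powr q1"
  using X_mult_sin_eq[OF assms] sin_pi_half_pos unfolding rho1_def rho2_def
  by (simp add: field_simps)

lemma astar_eq_a_at: "astar b c q1 q2 = a_at (pi / 2)"
  unfolding astar_def
proof (rule the_equality)
  define w where "w = radius (pi / 2)"
  have w: "w > 0" "H w (pi / 2) = 0"
    using radius_pos H_radius by (auto simp: w_def)
  have "b = rho1 q1 q2 * w powr q2 - c * rho2 q1 q2 * w powr (- q1)"
    using H_pi_half_eq_0_iff[OF w(1)] w(2) by blast
  moreover have "a_at (pi / 2) = c * rho1 q1 q2 * w powr (- q2) - rho2 q1 q2 * w powr q1"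
    using X_pi_half_eq[OF w] by (simp add: a_at_def w_def)
  ultimately show "\<exists>\<omega>>0. b = rho1 q1 q2 * \<omega> powr q2 - c * rho2 q1 q2 * \<omega> powr (- q1) \<and>
      a_at (pi / 2) = c * rho1 q1 q2 * \<omega> powr (- q2) - rho2 q1 q2 * \<omega> powr q1"
    using w(1) by blast
next
  fix a assume "\<exists>\<omega>>0. b = rho1 q1 q2 * \<omega> powr q2 - c * rho2 q1 q2 * \<omega> powr (- q1) \<and>
      a = c * rho1 q1 q2 * \<omega> powr (- q2) - rho2 q1 q2 * \<omega> powr q1"
  then obtain \<omega> where "\<omega> > 0" "H \<omega> (pi / 2) = 0"
    and "a = c * rho1 q1 q2 * \<omega> powr (- q2) - rho2 q1 q2 * \<omega> powr q1"
    using H_pi_half_eq_0_iff by blast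
  then show "a = a_at (pi / 2)"
    using X_pi_half_eq radius_eqI[of "pi / 2" \<omega>] by (simp add: a_at_def)
qed

lemma astar_neg_if_b_nonneg:
  assumes "b \<ge> 0"
  shows "astar b c q1 q2 < 0"
proof -
  define w where "w = radius (pi / 2)"
  define u v where "u = w powr q1" and "v = w powr q2"
  define \<rho>\<^sub>1 \<rho>\<^sub>2 where "\<rho>\<^sub>1 = rho1 q1 q2" and "\<rho>\<^sub>2 = rho2 q1 q2"
  have w: "w > 0" "H w (pi / 2) = 0"
    using radius_pos H_radius by (auto simp: w_def)
  have uv: "u > 0" "v > 0" using w by (simp_all add: u_def v_def)
  have "0 < q1 * pi / 2" "q1 * pi / 2 < q2 * pi / 2" "q2 * pi / 2 < pi / 2"
    using q1_pos q1_less_q2 q2_less_1 by simp_all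
  then have "sin (q1 * pi / 2) < sin (q2 * pi / 2)"
    by (intro sin_monotone_2pi) linarith+
  then have \<rho>: "0 < \<rho>\<^sub>1" "\<rho>\<^sub>1 < \<rho>\<^sub>2"
    using sin_pi_half_pos by (simp_all add: \<rho>\<^sub>1_def \<rho>\<^sub>2_def rho1_def rho2_def divide_strict_right_mono)
  have "b = \<rho>\<^sub>1 * v - c * \<rho>\<^sub>2 / u"
    using H_pi_half_eq_0_iff[OF w(1)] w(2) by (simp add: \<rho>\<^sub>1_def \<rho>\<^sub>2_def u_def v_def powr_minus_divide)
  then have "c * \<rho>\<^sub>2 + b * u = \<rho>\<^sub>1 * (u * v)"
    using uv by (simp add: field_simps)
  moreover have "b * u \<ge> 0" using assms uv by simp
  ultimately have "c * \<rho>\<^sub>2 \<le> \<rho>\<^sub>1 * (u * v)" by linarith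
  then have "c * \<rho>\<^sub>1 < \<rho>\<^sub>2 * (u * v)"
    using \<rho> uv c_pos by (smt (verit) mult_strict_left_mono mult_strict_right_mono mult_pos_pos)
  moreover have "astar b c q1 q2 * v = c * \<rho>\<^sub>1 - \<rho>\<^sub>2 * (u * v)"
    using X_pi_half_eq[OF w] uv
    by (simp add: astar_eq_a_at a_at_def w_def[symmetric] \<rho>\<^sub>1_def \<rho>\<^sub>2_def u_def v_def powr_minus_divide field_simps)
  ultimately have "astar b c q1 q2 * v < 0" by linarith
  then show ?thesis
    using uv by (simp add: mult_less_0_iff)
qed

definition G' :: "complex \<Rightarrow> complex" where
  "G' s = - (complex_of_real q1 * s powr complex_of_real (q1 - 1)
     + complex_of_real b * (complex_of_real (q1 - q2) * s powr complex_of_real (q1 - q2 - 1))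
     + complex_of_real c * (complex_of_real (- q2) * s powr complex_of_real (- q2 - 1)))"

lemma G_has_field_derivative:
  assumes "s \<notin> \<real>\<^sub>\<le>\<^sub>0"
  shows "(G has_field_derivative G' s) (at s)"
proof -
  have "((\<lambda>z. z powr complex_of_real p) has_field_derivative complex_of_real p * s powr complex_of_real (p - 1)) (at s)"
    for p
    using has_field_derivative_powr[OF assms, of "complex_of_real p"] by simp
  then show ?thesis
    unfolding G_def G'_def by (intro DERIV_minus DERIV_add DERIV_cmult)
qed

lemma Re_G'_imaginary_root:
  assumes "Re s = 0" "Delta q1 q2 a b c s = 0"
  shows "Re (G' s) < 0"
proof -
  define w where "w = cmod s"
  have "s \<noteq> 0" using root_nonzero[OF assms(2)] .
  then have w: "w > 0" "H w (pi / 2) = 0"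
    using Delta_eq_0_iff_polar[of s] abs_Arg_imaginary assms by (simp_all add: w_def)
  define u v where "u = w powr q1" and "v = w powr q2"
  have uv: "u > 0" "v > 0" using w by (simp_all add: u_def v_def)
  define s1 s2 sd where "s1 = sin (q1 * pi / 2)" and "s2 = sin (q2 * pi / 2)"
    and "sd = sin ((q2 - q1) * pi / 2)"
  have s12: "s1 > 0" "s2 > 0" using sin_pi_half_pos by (simp_all add: s1_def s2_def)
  have sin_diff: "sin ((q1 - q2) * pi / 2) = - sd"
    unfolding sd_def by (metis minus_diff_eq mult_minus_left sin_minus minus_divide_left)
  have sin_minus_q2: "sin (- q2 * pi / 2) = - s2"
    by (simp add: s2_def)
  have Re_powr: "Re (s powr complex_of_real (p - 1)) = w powr (p - 1) * sin (p * pi / 2)" for p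
    by (simp only: Re_powr_imaginary[OF assms(1) \<open>s \<noteq> 0\<close>] cos_minus_one_half_pi w_def)
  have "Re (G' s) = - (q1 * Re (s powr complex_of_real (q1 - 1))
      + b * ((q1 - q2) * Re (s powr complex_of_real (q1 - q2 - 1)))
      + c * (- q2 * Re (s powr complex_of_real (- q2 - 1))))"
    unfolding G'_def by simp
  also have "\<dots> = - (q1 * w powr (q1 - 1) * s1 + (q2 - q1) * w powr (q1 - q2 - 1) * (b * sd)
      + c * q2 * w powr (- q2 - 1) * s2)"
    unfolding Re_powr sin_diff sin_minus_q2 s1_def by (simp add: algebra_simps)
  also have "b * sd = v * s1 - c / u * s2"
    using w(2) unfolding H_def powr_shifts[OF w(1)] u_def v_def s1_def s2_def sd_def by simp
  also have "- (q1 * w powr (q1 - 1) * s1 + (q2 - q1) * w powr (q1 - q2 - 1) * (v * s1 - c / u * s2)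
      + c * q2 * w powr (- q2 - 1) * s2) = - (q2 * u * s1 / w + q1 * c * s2 / (v * w))"
    unfolding powr_shifts[OF w(1)] u_def[symmetric] v_def[symmetric] using uv w by (simp add: field_simps)
  also have "\<dots> < 0"
  proof -
    have "q2 * u * s1 / w > 0" "q1 * c * s2 / (v * w) > 0"
      using uv w s12 q1_pos q1_less_q2 c_pos by simp_all
    then show ?thesis by linarith
  qed
  finally show ?thesis .
qed

text \<open>Implicit differentiation of \<open>G (S x) = x\<close> gives \<open>S' = 1 / G' (S a0)\<close>.\<close>

lemma transversality:
  assumes roots: "\<forall>\<^sub>F x in nhds a0. Delta q1 q2 x b c (S x) = 0"
    and S': "(S has_vector_derivative S') (at a0)" and "Re (S a0) = 0"
  shows "Re S' < 0"
proof -
  have root: "Delta q1 q2 a0 b c (S a0) = 0"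
    using eventually_nhds_x_imp_x[OF roots] .
  have "S a0 \<notin> \<real>\<^sub>\<le>\<^sub>0"
    using root_nonzero[OF root] \<open>Re (S a0) = 0\<close> by (auto simp: complex_nonpos_Reals_iff complex_eq_iff)
  then have chain: "((G \<circ> S) has_derivative (\<lambda>x. x *\<^sub>R (S' * G' (S a0)))) (at a0)"
    using field_vector_diff_chain_at[OF S' G_has_field_derivative]
    by (simp add: has_vector_derivative_def)
  have G_S: "\<forall>\<^sub>F x in nhds a0. (G \<circ> S) x = complex_of_real x"
    using roots
  proof eventually_elim
    case (elim x)
    then show ?case using Delta_eq_0_iff[OF root_nonzero[OF elim]] by simp
  qed
  then have "\<forall>\<^sub>F x in at a0. (G \<circ> S) x = complex_of_real x"
    by (simp add: eventually_at_filter eventually_mono)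
  from has_derivative_transform_eventually[OF chain this eventually_nhds_x_imp_x[OF G_S]]
  have "((\<lambda>x. complex_of_real x) has_vector_derivative S' * G' (S a0)) (at a0)"
    by (simp add: has_vector_derivative_def)
  moreover have "((\<lambda>x. complex_of_real x) has_vector_derivative 1) (at a0)"
    using has_vector_derivative_of_real[OF DERIV_ident, of "at a0"] by simp
  ultimately have "S' * G' (S a0) = 1"
    by (rule vector_derivative_unique_at)
  moreover have "Re (G' (S a0)) < 0"
    using Re_G'_imaginary_root[OF \<open>Re (S a0) = 0\<close> root] .
  then have "G' (S a0) \<noteq> 0" by auto
  with \<open>S' * G' (S a0) = 1\<close> have "S' = inverse (G' (S a0))"
    by (simp add: field_simps)
  with \<open>Re (G' (S a0)) < 0\<close> show ?thesis
    by (simp add: divide_neg_pos sum_power2_gt_zero_iff)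
qed

lemma imaginary_roots_iff_astar:
  "(\<exists>\<omega>::real. \<omega> > 0 \<and> Delta q1 q2 a b c (\<i> * complex_of_real \<omega>) = 0
      \<and> Delta q1 q2 a b c (- \<i> * complex_of_real \<omega>) = 0) \<longleftrightarrow> a = astar b c q1 q2"
  unfolding astar_eq_a_at by (rule imaginary_roots_iff)

lemma roots_in_left_half_plane_iff:
  "(\<forall>s. Delta q1 q2 a b c s = 0 \<longrightarrow> Re s < 0) \<longleftrightarrow> a > astar b c q1 q2"
proof
  assume left: "\<forall>s. Delta q1 q2 a b c s = 0 \<longrightarrow> Re s < 0"
  have "\<not> a < a_at (pi / 2)"
    using right_half_plane_roots_if_less_a_at left by force
  moreover have "a \<noteq> a_at (pi / 2)"
    using imaginary_roots_iff left by force
  ultimately show "a > astar b c q1 q2"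
    by (simp add: astar_eq_a_at)
next
  assume "a > astar b c q1 q2"
  then show "\<forall>s. Delta q1 q2 a b c s = 0 \<longrightarrow> Re s < 0"
    using root_Re_nonneg_le_a_at(1) by (force simp: astar_eq_a_at)
qed

lemma right_half_plane_root_pair_iff:
  "(\<exists>s. Re s > 0 \<and> Delta q1 q2 a b c s = 0 \<and> Delta q1 q2 a b c (cnj s) = 0) \<longleftrightarrow> a < astar b c q1 q2"
  using right_half_plane_roots_if_less_a_at root_Re_nonneg_le_a_at(2)
  by (force simp: astar_eq_a_at)

end

lemma positive_real_root_if_c_neg:
  assumes "0 < q1" "q1 < q2" "c < 0"
  shows "\<exists>x>0. Delta q1 q2 a b c (complex_of_real x) = 0"
proof -
  define f where "f x = x powr (q1 + q2) + a * x powr q2 + b * x powr q1 + c" for x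
  have "\<exists>x>0. f x = 0"
  proof (rule IVT_pos_reals_eventually)
    show "continuous_on {0<..} f"
      unfolding f_def by (intro continuous_intros) auto
    have "(f \<longlongrightarrow> c) (at_right 0)"
      unfolding f_def using assms by real_asymp
    then show "\<forall>\<^sub>F x in at_right 0. f x < 0"
      using assms by (simp add: order_tendstoD)
    have "filterlim f at_top at_top"
      unfolding f_def using assms by real_asymp
    then show "\<forall>\<^sub>F x in at_top. f x > 0"
      unfolding filterlim_at_top_dense by blast
  qed
  moreover have "Delta q1 q2 a b c (complex_of_real x) = complex_of_real (f x)" if "x > 0" for x
    unfolding Delta_def f_def powr_of_real[OF less_imp_le[OF that]] by simp
  ultimately show ?thesis by auto
qed

theorem proposition1:
  fixes q1 q2 a b c :: real
  assumes "0 < q1" and "q1 < q2" and "q2 < 1"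
  shows
   "(c < 0 \<longrightarrow> (\<exists>x::real. x > 0 \<and> Delta q1 q2 a b c (complex_of_real x) = 0))
    \<and> (Delta q1 q2 a b c 0 = 0 \<longleftrightarrow> c = 0)
    \<and> (c > 0 \<longrightarrow>
         ((a \<ge> 0 \<and> b \<ge> 0 \<longrightarrow> (\<forall>s. Delta q1 q2 a b c s = 0 \<longrightarrow> Re s < 0))
          \<and> ((\<exists>\<omega>::real. \<omega> > 0 \<and> Delta q1 q2 a b c (\<i> * complex_of_real \<omega>) = 0
                          \<and> Delta q1 q2 a b c (- \<i> * complex_of_real \<omega>) = 0)
              \<longleftrightarrow> a = astar b c q1 q2)
          \<and> (\<forall>(S :: real \<Rightarrow> complex) S'.
                (\<forall>\<^sub>F x in nhds (astar b c q1 q2). Delta q1 q2 x b c (S x) = 0)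
                \<and> (S has_vector_derivative S') (at (astar b c q1 q2))
                \<and> Re (S (astar b c q1 q2)) = 0
                \<longrightarrow> Re S' < 0)
          \<and> ((\<forall>s. Delta q1 q2 a b c s = 0 \<longrightarrow> Re s < 0) \<longleftrightarrow> a > astar b c q1 q2)
          \<and> ((\<exists>s. Re s > 0 \<and> Delta q1 q2 a b c s = 0 \<and> Delta q1 q2 a b c (cnj s) = 0)
              \<longleftrightarrow> a < astar b c q1 q2)))"
proof -
  have char: "frac_char q1 q2 c" if "c > 0"
    using assms that by unfold_locales
  have astar_less: "astar b c q1 q2 < a" if "c > 0" "a \<ge> 0" "b \<ge> 0"
    using frac_char.astar_neg_if_b_nonneg[OF char] that by fastforce
  show ?thesis
    using positive_real_root_if_c_neg[OF assms(1,2)] astar_less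
      frac_char.imaginary_roots_iff_astar[OF char]
      frac_char.transversality[OF char]
      frac_char.roots_in_left_half_plane_iff[OF char]
      frac_char.right_half_plane_root_pair_iff[OF char]
    by auto
qed

end
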